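(* Let $T$ be a complete theory and $\phi,\psi$ formulas with $T\vdash\phi\,\mathtt U\,\psi$. Then $T\vdash\phi\,\mathtt u\,\psi$, or there exists $m\in\omega$ such that $T\vdash\bigwedge_{i=0}^m[\omega]^i\mathtt g(\phi\wedge\neg\psi)\wedge[\omega]^{m+1}(\phi\,\mathtt u\,\psi)$.
   Context: Fix $Var=\{p_n : n\in\omega\}$. The formulas of $L([1],[\omega],\mathtt u,\mathtt U)$ form the smallest set containing $Var$ and closed under $\neg\phi$, $[1]\phi$, $[\omega]\phi$, $(\phi\wedge\psi)$, $(\phi\,\mathtt u\,\psi)$, $(\phi\,\mathtt U\,\psi)$. Abbreviations: $\vee,\to,\leftrightarrow$ as usual; $\mathtt f\phi:=(\phi\to\phi)\,\mathtt u\,\phi$, $\mathtt g\phi:=\neg\mathtt f\neg\phi$; $[a]^0\phi:=\phi$, $[a]^{n+1}\phi:=[a][a]^n\phi$ for $a\in\{1,\omega\}$. A theory is a nonempty set of formulas. Proof system. Axioms: all instances of A1 substitution instances of classical tautologies; A2 $[1][\omega]\phi\leftrightarrow[\omega]\phi$; A3 $\neg[a]\phi\leftrightarrow[a]\neg\phi$ ($a\in\{1,\omega\}$); A4 $[a](\phi*\psi)\leftrightarrow([a]\phi*[a]\psi)$ ($a\in\{1,\omega\}$, $*\in\{\wedge,\vee,\to,\leftrightarrow\}$); A5 $\psi\to\phi\,\mathtt u\,\psi$; A6 $\phi\,\mathtt u\,\psi\to\phi\,\mathtt U\,\psi$; A7 $\big(\bigwedge_{k=0}^n[1]^k(\phi\wedge\neg\psi)\wedge[1]^{n+1}\psi\big)\to\phi\,\mathtt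 u\,\psi$ ($n\in\omega$); A8 $\big(\bigwedge_{k=0}^n[\omega]^k\mathtt g(\phi\wedge\neg\psi)\wedge[\omega]^{n+1}(\phi\,\mathtt u\,\psi)\big)\to\phi\,\mathtt U\,\psi$ ($n\in\omega$). Rules: R1 from $\phi$ and $\phi\to\psi$ infer $\psi$; R2 from $\phi$ infer $[a]\phi$, $a\in\{1,\omega\}$; R3 from $\theta\to\neg\psi$ and all $\theta\to\big(\bigvee_{k=0}^n[1]^k(\neg\phi\vee\psi)\vee[1]^{n+1}\neg\psi\big)$, $n\in\omega$, infer $\theta\to\neg(\phi\,\mathtt u\,\psi)$; R4 from $\theta\to\neg(\phi\,\mathtt u\,\psi)$ and all $\theta\to\big(\bigvee_{k=0}^n[\omega]^k\neg\mathtt g(\phi\wedge\neg\psi)\vee[\omega]^{n+1}\neg(\phi\,\mathtt u\,\psi)\big)$, $n\in\omega$, infer $\theta\to\neg(\phi\,\mathtt U\,\psi)$. $\vdash\phi$ ($\phi$ is a theorem) iff there is a sequence $(\phi_\beta)_{\beta\le\alpha}$, $\alpha$ a countable ordinal, with $\phi_\alpha=\phi$ and each $\phi_\beta$ an axiom or obtained from earlier members by a rule. $T\vdash\phi$ iff there is such a sequence in which each member is an axiom, a member of $T$, or obtained from earlier members by a rule, where R2 may only be applied to theorems. A theory $T$ is consistent iff there is no formula $\chi$ with $T\vdash\chi$ and $T\vdash\neg\chi$; $T$ is complete iff it is consistent and for every formula $\chi$, $T\vdash\chi$ or $T\vdash\neg\chi$. *)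

theory Defs
  imports Main
begin

datatype md = One | Om

datatype fm =
    Var nat
  | Neg fm
  | Box md fm
  | Conj fm fm
  | Uu fm fm
  | UU fm fm

definition Disj :: "fm \<Rightarrow> fm \<Rightarrow> fm" where
  "Disj a b = Neg (Conj (Neg a) (Neg b))"
definition Imp :: "fm \<Rightarrow> fm \<Rightarrow> fm" where
  "Imp a b = Neg (Conj a (Neg b))"
definition Iff :: "fm \<Rightarrow> fm \<Rightarrow> fm" where
  "Iff a b = Conj (Imp a b) (Imp b a)"

definition Ff :: "fm \<Rightarrow> fm" where
  "Ff a = Uu (Imp a a) a"
definition Gg :: "fm \<Rightarrow> fm" where
  "Gg a = Neg (Ff (Neg a))"

definition boxn :: "md \<Rightarrow> nat \<Rightarrow> fm \<Rightarrow> fm" where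
  "boxn m n a = ((Box m) ^^ n) a"

fun bigconj :: "(nat \<Rightarrow> fm) \<Rightarrow> nat \<Rightarrow> fm" where
  "bigconj f 0 = f 0"
| "bigconj f (Suc n) = Conj (bigconj f n) (f (Suc n))"
fun bigdisj :: "(nat \<Rightarrow> fm) \<Rightarrow> nat \<Rightarrow> fm" where
  "bigdisj f 0 = f 0"
| "bigdisj f (Suc n) = Disj (bigdisj f n) (f (Suc n))"

fun peval :: "(fm \<Rightarrow> bool) \<Rightarrow> fm \<Rightarrow> bool" where
  "peval v (Neg a) = (\<not> peval v a)"
| "peval v (Conj a b) = (peval v a \<and> peval v b)"
| "peval v a = v a"

(* substitution instances of classical tautologies *)
definition taut :: "fm \<Rightarrow> bool" where
  "taut a = (\<forall>v. peval v a)"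

inductive Ax :: "fm \<Rightarrow> bool" where
  A1: "taut a \<Longrightarrow> Ax a"
| A2: "Ax (Iff (Box One (Box Om a)) (Box Om a))"
| A3: "Ax (Iff (Neg (Box m a)) (Box m (Neg a)))"
| A4c: "Ax (Iff (Box m (Conj a b)) (Conj (Box m a) (Box m b)))"
| A4d: "Ax (Iff (Box m (Disj a b)) (Disj (Box m a) (Box m b)))"
| A4i: "Ax (Iff (Box m (Imp a b)) (Imp (Box m a) (Box m b)))"
| A4e: "Ax (Iff (Box m (Iff a b)) (Iff (Box m a) (Box m b)))"
| A5: "Ax (Imp b (Uu a b))"
| A6: "Ax (Imp (Uu a b) (UU a b))"
| A7: "Ax (Imp (Conj (bigconj (\<lambda>k. boxn One k (Conj a (Neg b))) n) (boxn One (Suc n) b))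
              (Uu a b))"
| A8: "Ax (Imp (Conj (bigconj (\<lambda>k. boxn Om k (Gg (Conj a (Neg b)))) n) (boxn Om (Suc n) (Uu a b)))
              (UU a b))"

(* Theorems (\<turnstile> \<phi>).  Inductive closure = derivability by sequences of countable ordinal
   length, since every rule has at most countably many premises. *)
inductive isthm :: "fm \<Rightarrow> bool" where
  ax: "Ax a \<Longrightarrow> isthm a"
| R1: "isthm a \<Longrightarrow> isthm (Imp a b) \<Longrightarrow> isthm b"
| R2: "isthm a \<Longrightarrow> isthm (Box m a)"
| R3: "isthm (Imp th (Neg b)) \<Longrightarrow>
       (\<And>n. isthm (Imp th (Disj (bigdisj (\<lambda>k. boxn One k (Disj (Neg a) b)) n)
                              (boxn One (Suc n) (Neg b))))) \<Longrightarrow>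
       isthm (Imp th (Neg (Uu a b)))"
| R4: "isthm (Imp th (Neg (Uu a b))) \<Longrightarrow>
       (\<And>n. isthm (Imp th (Disj (bigdisj (\<lambda>k. boxn Om k (Neg (Gg (Conj a (Neg b))))) n)
                              (boxn Om (Suc n) (Neg (Uu a b)))))) \<Longrightarrow>
       isthm (Imp th (Neg (UU a b)))"

(* T \<turnstile> \<phi>; R2 only applicable to theorems *)
inductive derives :: "fm set \<Rightarrow> fm \<Rightarrow> bool" where
  ax: "Ax a \<Longrightarrow> derives T a"
| hyp: "a \<in> T \<Longrightarrow> derives T a"
| R1: "derives T a \<Longrightarrow> derives T (Imp a b) \<Longrightarrow> derives T b"
| R2: "isthm a \<Longrightarrow> derives T (Box m a)"
| R3: "derives T (Imp th (Neg b)) \<Longrightarrow>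
       (\<And>n. derives T (Imp th (Disj (bigdisj (\<lambda>k. boxn One k (Disj (Neg a) b)) n)
                              (boxn One (Suc n) (Neg b))))) \<Longrightarrow>
       derives T (Imp th (Neg (Uu a b)))"
| R4: "derives T (Imp th (Neg (Uu a b))) \<Longrightarrow>
       (\<And>n. derives T (Imp th (Disj (bigdisj (\<lambda>k. boxn Om k (Neg (Gg (Conj a (Neg b))))) n)
                              (boxn Om (Suc n) (Neg (Uu a b)))))) \<Longrightarrow>
       derives T (Imp th (Neg (UU a b)))"

definition is_theory :: "fm set \<Rightarrow> bool" where
  "is_theory T = (T \<noteq> {})"

definition consistent :: "fm set \<Rightarrow> bool" where
  "consistent T = (\<not> (\<exists>c. derives T c \<and> derives T (Neg c)))"

definition complete :: "fm set \<Rightarrow> bool" where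
  "complete T = (consistent T \<and> (\<forall>c. derives T c \<or> derives T (Neg c)))"

end

theory Submission
  imports Defs
begin

text \<open>If neither disjunct were derivable, completeness would make $T$ derive the negation of
  \<open>a u b\<close> and of every conjunction $\bigwedge_{i\le n}[\omega]^i\mathtt g(a\wedge\neg b)\wedge
  [\omega]^{n+1}(a\,\mathtt u\,b)$. Up to the duality between $[\omega]$ and $\neg$, these are the
  premises of the infinitary rule R4 (with a tautological antecedent), so $T$ would derive
  \<open>\<not> (a U b)\<close>, contradicting consistency.\<close>

lemma derives_if_isthm: "isthm a \<Longrightarrow> derives T a"
  by (induction rule: isthm.induct) (auto intro: derives.intros)

lemma derives_taut_mp:
  "derives T a \<Longrightarrow> taut (Imp a c) \<Longrightarrow> derives T c"
  by (meson Ax.A1 derives.R1 derives.ax)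

lemma derives_taut_mp2:
  "derives T a \<Longrightarrow> derives T b \<Longrightarrow> taut (Imp a (Imp b c)) \<Longrightarrow> derives T c"
  by (meson Ax.A1 derives.R1 derives.ax)

lemma derives_taut_mp3:
  "derives T a \<Longrightarrow> derives T b \<Longrightarrow> derives T d \<Longrightarrow> taut (Imp a (Imp b (Imp d c)))
    \<Longrightarrow> derives T c"
  by (meson Ax.A1 derives.R1 derives.ax)

lemma isthm_taut_mp2:
  "isthm a \<Longrightarrow> isthm b \<Longrightarrow> taut (Imp a (Imp b c)) \<Longrightarrow> isthm c"
  by (meson Ax.A1 isthm.R1 isthm.ax)

lemma isthm_boxn_Neg_iff: "isthm (Iff (boxn m k (Neg a)) (Neg (boxn m k a)))"
proof (induction k)
  case 0
  show ?case by (auto intro!: isthm.ax Ax.A1 simp: boxn_def taut_def Iff_def Imp_def)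
next
  case (Suc k)
  let ?X = "boxn m k (Neg a)" and ?Y = "boxn m k a"
  have box_IH: "isthm (Iff (Box m ?X) (Box m (Neg ?Y)))"
    by (rule isthm.R1[OF isthm.R2[OF Suc] isthm.R1[OF isthm.ax[OF Ax.A4e]]])
       (auto intro!: isthm.ax Ax.A1 simp: taut_def Iff_def Imp_def)
  have "isthm (Iff (Neg (Box m ?Y)) (Box m (Neg ?Y)))" by (rule isthm.ax[OF Ax.A3])
  then show ?case
    by (rule isthm_taut_mp2[OF box_IH]) (simp add: boxn_def taut_def Iff_def Imp_def, blast)
qed

lemma derives_bigdisj_Neg_iff:
  assumes "\<And>k. derives T (Iff (g k) (Neg (f k)))"
  shows "derives T (Iff (bigdisj g n) (Neg (bigconj f n)))"
proof (induction n)
  case 0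
  show ?case using assms by simp
next
  case (Suc n)
  show ?case
    by (simp, rule derives_taut_mp2[OF Suc assms[of "Suc n"]])
       (simp add: taut_def Iff_def Imp_def Disj_def, blast)
qed

lemma derives_Neg_UU:
  assumes neg_Uu: "derives T (Neg (Uu a b))"
    and neg_approx: "\<And>n. derives T (Neg (Conj (bigconj (\<lambda>i. boxn Om i (Gg (Conj a (Neg b)))) n)
                                             (boxn Om (Suc n) (Uu a b))))"
  shows "derives T (Neg (UU a b))"
proof -
  define top where "top = Imp (Var 0) (Var 0)"
  have top: "derives T top"
    unfolding top_def by (auto intro!: derives.ax Ax.A1 simp: taut_def Imp_def)
  let ?G = "Gg (Conj a (Neg b))"
  have "derives T (Imp top (Neg (Uu a b)))"
    by (rule derives_taut_mp[OF neg_Uu]) (simp add: taut_def Imp_def)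
  moreover have "derives T (Imp top (Disj (bigdisj (\<lambda>k. boxn Om k (Neg ?G)) n)
                                           (boxn Om (Suc n) (Neg (Uu a b)))))" for n
  proof -
    have "derives T (Iff (bigdisj (\<lambda>k. boxn Om k (Neg ?G)) n)
                         (Neg (bigconj (\<lambda>i. boxn Om i ?G) n)))"
      by (rule derives_bigdisj_Neg_iff) (rule derives_if_isthm[OF isthm_boxn_Neg_iff])
    then show ?thesis
      by (rule derives_taut_mp3[OF neg_approx _ derives_if_isthm[OF isthm_boxn_Neg_iff]])
         (simp add: taut_def Iff_def Imp_def Disj_def, blast)
  qed
  ultimately have "derives T (Imp top (Neg (UU a b)))" by (rule derives.R4)
  with top show ?thesis by (rule derives.R1)
qed

theorem mainTheorem8:
  fixes T :: "fm set" and a b :: fm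
  assumes "is_theory T" and "complete T" and "derives T (UU a b)"
  shows "derives T (Uu a b) \<or>
         (\<exists>m. derives T (Conj (bigconj (\<lambda>i. boxn Om i (Gg (Conj a (Neg b)))) m)
                              (boxn Om (Suc m) (Uu a b))))"
proof (rule ccontr)
  assume neither: "\<not> ?thesis"
  have consistent: "consistent T" and decides: "\<And>c. derives T c \<or> derives T (Neg c)"
    using assms(2) by (auto simp: complete_def)
  have "derives T (Neg (UU a b))"
    by (rule derives_Neg_UU) (use neither decides in blast)+
  with consistent assms(3) show False by (auto simp: consistent_def)
qed

end
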